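(* Let $n$ be an odd prime and $\omega_n=e^{2\pi i/n}$. Define $$A_n=\{\Re(\omega_n),\Re(\omega_n^2),\dots,\Re(\omega_n^{(n-1)/2})\},\qquad B_n=\{i\,\Im(\omega_n), i\,\Im(\omega_n^2),\dots,i\,\Im(\omega_n^{(n-1)/2})\}.$$ Then $A_n\cup B_n$ is a basis for the cyclotomic field $\mathbb{Q}(\omega_n)$ as a vector space over $\mathbb{Q}$.
   Context: $\Re$ and $\Im$ denote real and imaginary parts of a complex number. *)

theory Defs
  imports Complex_Main "HOL-Computational_Algebra.Primes"
begin

definition complex_subfield :: "complex set \<Rightarrow> bool" where
  "complex_subfield S \<longleftrightarrow> 0 \<in> S \<and> 1 \<in> S \<and>
     (\<forall>x\<in>S. \<forall>y\<in>S. x + y \<in> S \<and> x - y \<in> S \<and> x * y \<in> S) \<and>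
     (\<forall>x\<in>S. x \<noteq> 0 \<longrightarrow> inverse x \<in> S)"

text \<open>The field Q(a): the smallest subfield of C containing a (every subfield contains Q).\<close>
definition rat_adjoin :: "complex \<Rightarrow> complex set" where
  "rat_adjoin a = \<Inter>{S. complex_subfield S \<and> a \<in> S}"

definition rat_basis :: "complex set \<Rightarrow> complex set \<Rightarrow> bool" where
  "rat_basis S F \<longleftrightarrow> finite S \<and> S \<subseteq> F \<and>
     (\<forall>c :: complex \<Rightarrow> rat. (\<Sum>x\<in>S. of_rat (c x) * x) = 0 \<longrightarrow> (\<forall>x\<in>S. c x = 0)) \<and>
     (\<forall>z\<in>F. \<exists>c :: complex \<Rightarrow> rat. z = (\<Sum>x\<in>S. of_rat (c x) * x))"

end

theory Submission
  imports Defs "Berlekamp_Zassenhaus.Factor_Bound"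
begin

text \<open>
  The primitive root \<zeta> = exp (2\<pi>i/n) is a root of the shifted cyclotomic polynomial
  ((x + 1)^n - 1)/x, which is irreducible over \<rat> by Eisenstein's criterion at the prime n
  together with Gauss's lemma. Hence \<rat>(\<zeta>) = \<rat>[\<zeta>] has the basis 1, \<zeta>, ..., \<zeta>^(n-2), and after
  multiplying by \<zeta> also the basis \<zeta>, ..., \<zeta>^(n-1). As |\<zeta>| = 1, \<zeta>^(n-k) is the conjugate of \<zeta>^k, so
  for odd n and 1 \<le> k \<le> (n-1)/2 the pairs \<zeta>^k, \<zeta>^(n-k) can be replaced by
  Re \<zeta>^k = (\<zeta>^k + \<zeta>^(n-k))/2 and i Im \<zeta>^k = (\<zeta>^k - \<zeta>^(n-k))/2, an invertible change of
  coordinates.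
\<close>

(* makes hom_distribs push map_poly of_rat through sums and products *)
interpretation of_rat_poly_hom: map_poly_idom_hom "of_rat :: rat \<Rightarrow> 'a :: field_char_0" ..

lemma least_coeff_not_dvdE:
  fixes g :: "'a :: comm_semiring_1 poly"
  assumes "\<not> p dvd lead_coeff g"
  obtains i where "i \<le> degree g" "\<not> p dvd coeff g i" "\<And>i'. i' < i \<Longrightarrow> p dvd coeff g i'"
proof
  define i where "i = (LEAST i. \<not> p dvd coeff g i)"
  show "i \<le> degree g"
    unfolding i_def using assms by (auto intro: Least_le)
  show "\<not> p dvd coeff g i"
    unfolding i_def using assms LeastI[of "\<lambda>i. \<not> p dvd coeff g i" "degree g"] by simp
  show "p dvd coeff g i'" if "i' < i" for i'
    using not_less_Least[OF that[unfolded i_def]] by simp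
qed

lemma prime_elem_not_dvd_coeff_mult:
  fixes g h :: "'a :: idom poly"
  assumes "prime_elem p"
    and g: "\<not> p dvd coeff g i" "\<And>i'. i' < i \<Longrightarrow> p dvd coeff g i'"
    and h: "\<not> p dvd coeff h j" "\<And>j'. j' < j \<Longrightarrow> p dvd coeff h j'"
  shows "\<not> p dvd coeff (g * h) (i + j)"
proof
  let ?rest = "\<Sum>k\<in>{..i + j} - {i}. coeff g k * coeff h (i + j - k)"
  have "coeff (g * h) (i + j) = coeff g i * coeff h j + ?rest"
    by (simp add: coeff_mult sum.remove[of _ i])
  moreover have "p dvd ?rest"
  proof (rule dvd_sum)
    fix k assume "k \<in> {..i + j} - {i}"
    then have "k < i \<or> i + j - k < j" by auto
    then show "p dvd coeff g k * coeff h (i + j - k)"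
      using g(2) h(2) by (auto intro: dvd_mult dvd_mult2)
  qed
  moreover assume "p dvd coeff (g * h) (i + j)"
  ultimately have "p dvd coeff g i * coeff h j" by (simp add: dvd_add_left_iff)
  with assms g(1) h(1) show False by (simp add: prime_elem_dvd_mult_iff)
qed

lemma eisenstein_criterion:
  fixes f g h :: "'a :: idom poly"
  assumes "prime_elem p" and f: "f = g * h"
    and lead: "\<not> p dvd lead_coeff f"
    and lower: "\<And>k. k < degree f \<Longrightarrow> p dvd coeff f k"
    and const: "\<not> p ^ 2 dvd coeff f 0"
  shows "degree g = 0 \<or> degree h = 0"
proof (rule ccontr)
  assume nonconst: "\<not> (degree g = 0 \<or> degree h = 0)"
  have "g \<noteq> 0" "h \<noteq> 0" using nonconst by auto
  then have deg: "degree f = degree g + degree h" by (simp add: f degree_mult_eq)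
  have "\<not> p dvd lead_coeff g" "\<not> p dvd lead_coeff h"
    using lead by (auto simp: f lead_coeff_mult)
  then obtain i j where
      i: "i \<le> degree g" "\<not> p dvd coeff g i" "\<And>i'. i' < i \<Longrightarrow> p dvd coeff g i'" and
      j: "j \<le> degree h" "\<not> p dvd coeff h j" "\<And>j'. j' < j \<Longrightarrow> p dvd coeff h j'"
    by (metis least_coeff_not_dvdE)
  have "\<not> p dvd coeff f (i + j)"
    unfolding f using prime_elem_not_dvd_coeff_mult[OF assms(1) i(2,3) j(2,3)] .
  then have "i = degree g" "j = degree h" using lower[of "i + j"] deg i(1) j(1) by linarith+
  then have "p dvd coeff g 0" "p dvd coeff h 0" using i(3) j(3) nonconst by auto
  then have "p ^ 2 dvd coeff f 0" by (simp add: f coeff_mult_0 power2_eq_square mult_dvd_mono)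
  with const show False ..
qed

(* ((x + 1)^n - 1)/x, i.e. for prime n the cyclotomic polynomial evaluated at x + 1 *)
definition shifted_cyclotomic :: "nat \<Rightarrow> 'a :: comm_semiring_1 poly" where
  "shifted_cyclotomic n = (\<Sum>j<n. monom (of_nat (n choose Suc j)) j)"

lemma coeff_shifted_cyclotomic:
  "coeff (shifted_cyclotomic n) k = (if k < n then of_nat (n choose Suc k) else 0)"
  by (simp add: shifted_cyclotomic_def coeff_sum coeff_monom)

lemma degree_shifted_cyclotomic:
  assumes "n > 0" shows "degree (shifted_cyclotomic n) = n - 1"
proof (rule antisym)
  show "degree (shifted_cyclotomic n) \<le> n - 1"
    by (rule degree_le) (auto simp: coeff_shifted_cyclotomic)
  show "n - 1 \<le> degree (shifted_cyclotomic n)"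
    by (rule le_degree) (use assms in \<open>simp add: coeff_shifted_cyclotomic\<close>)
qed

lemma lead_coeff_shifted_cyclotomic:
  "n > 0 \<Longrightarrow> lead_coeff (shifted_cyclotomic n) = 1"
  by (simp add: degree_shifted_cyclotomic coeff_shifted_cyclotomic)

lemma map_poly_shifted_cyclotomic:
  assumes "comm_semiring_hom h" shows "map_poly h (shifted_cyclotomic n) = shifted_cyclotomic n"
proof -
  interpret comm_semiring_hom h by (fact assms)
  show ?thesis by (rule poly_eqI) (simp add: coeff_shifted_cyclotomic hom_distribs)
qed

lemma poly_shifted_cyclotomic:
  fixes x :: "'a :: comm_ring_1"
  shows "x * poly (shifted_cyclotomic n) x = (x + 1) ^ n - 1"
proof -
  have "x * poly (shifted_cyclotomic n) x = (\<Sum>j<n. of_nat (n choose Suc j) * x ^ Suc j)"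
    by (simp add: shifted_cyclotomic_def poly_sum poly_monom sum_distrib_left mult_ac)
  also have "\<dots> = (\<Sum>k<Suc n. of_nat (n choose k) * x ^ k) - 1"
    by (simp only: sum.lessThan_Suc_shift) simp
  also have "(\<Sum>k<Suc n. of_nat (n choose k) * x ^ k) = (x + 1) ^ n"
    by (simp add: binomial_ring lessThan_Suc_atMost)
  finally show ?thesis .
qed

lemma irreducible_shifted_cyclotomic:
  assumes "prime n" shows "irreducible (shifted_cyclotomic n :: rat poly)"
proof (rule irreducibleI)
  have "n > 1" using assms prime_gt_1_nat by blast
  then have "lead_coeff (shifted_cyclotomic n :: rat poly) = 1"
    and deg: "degree (shifted_cyclotomic n :: rat poly) = n - 1"
    by (intro lead_coeff_shifted_cyclotomic degree_shifted_cyclotomic; simp)+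
  then show nonzero: "shifted_cyclotomic n \<noteq> (0 :: rat poly)" by auto
  show "\<not> is_unit (shifted_cyclotomic n :: rat poly)"
    using nonzero deg \<open>n > 1\<close> by (simp add: is_unit_iff_degree)
  fix g h :: "rat poly" assume gh: "shifted_cyclotomic n = g * h"
  have "map_poly rat_of_int (shifted_cyclotomic n) = g * h"
    using gh by (simp add: map_poly_shifted_cyclotomic of_int_hom.comm_semiring_hom_axioms)
  then obtain g' h' :: "int poly" where gh': "shifted_cyclotomic n = g' * h'"
      and degrees: "degree g' = degree g" "degree h' = degree h"
    using rat_to_int_factor by blast
  have "degree g' = 0 \<or> degree h' = 0"
  proof (rule eisenstein_criterion[OF _ gh'])
    show "prime_elem (int n)" using assms by simp
    have "lead_coeff (shifted_cyclotomic n :: int poly) = 1"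
      using \<open>n > 1\<close> by (intro lead_coeff_shifted_cyclotomic) simp
    then show "\<not> int n dvd lead_coeff (shifted_cyclotomic n)"
      using \<open>n > 1\<close> by simp
    show "int n dvd coeff (shifted_cyclotomic n) k"
      if "k < degree (shifted_cyclotomic n :: int poly)" for k
      using that \<open>n > 1\<close> assms
      by (simp add: degree_shifted_cyclotomic coeff_shifted_cyclotomic dvd_choose_prime)
    show "\<not> (int n) ^ 2 dvd coeff (shifted_cyclotomic n) 0"
      using \<open>n > 1\<close> by (simp add: coeff_shifted_cyclotomic power2_eq_square)
  qed
  then show "is_unit g \<or> is_unit h"
    using nonzero gh degrees by (auto simp: is_unit_iff_degree)
qed

lemma irreducible_pcompose_linear:
  fixes p :: "'a :: field poly"
  assumes irred: "irreducible p" and "a \<noteq> 0"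
  shows "irreducible (p \<circ>\<^sub>p [:b, a:])"
proof -
  let ?q = "[:b, a:]" and ?q' = "[:- b / a, 1 / a:]"
  have linear_inverse: "?q \<circ>\<^sub>p ?q' = [:0, 1:]"
    using \<open>a \<noteq> 0\<close> by (simp add: pcompose_pCons)
  have compose_back: "r \<circ>\<^sub>p ?q \<circ>\<^sub>p ?q' = r" for r :: "'a poly"
    by (simp only: pcompose_assoc[symmetric] linear_inverse pcompose_idR)
  have "p \<noteq> 0" "degree p \<noteq> 0" using irred by (auto simp: irreducible_def)
  show ?thesis
  proof (rule irreducibleI)
    have "degree (p \<circ>\<^sub>p ?q) = degree p" using \<open>a \<noteq> 0\<close> by (simp add: degree_pcompose)
    then have "degree (p \<circ>\<^sub>p ?q) \<noteq> 0" using \<open>degree p \<noteq> 0\<close> by argo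
    then show "p \<circ>\<^sub>p ?q \<noteq> 0" "\<not> is_unit (p \<circ>\<^sub>p ?q)"
      by (metis degree_0, metis degree_0 is_unit_iff_degree)
    fix g h assume gh: "p \<circ>\<^sub>p ?q = g * h"
    then have "g \<noteq> 0" "h \<noteq> 0" using \<open>p \<noteq> 0\<close> compose_back[of p] by auto
    have "p = (g \<circ>\<^sub>p ?q') * (h \<circ>\<^sub>p ?q')"
      using compose_back[of p] by (simp add: gh pcompose_mult)
    then have "is_unit (g \<circ>\<^sub>p ?q') \<or> is_unit (h \<circ>\<^sub>p ?q')"
      by (rule irreducibleD[OF irred])
    then have "degree g = 0 \<or> degree h = 0"
      using \<open>a \<noteq> 0\<close> by (auto simp: is_unit_iff_degree degree_pcompose)
    then show "is_unit g \<or> is_unit h"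
      using \<open>g \<noteq> 0\<close> \<open>h \<noteq> 0\<close> by (auto simp: is_unit_iff_degree)
  qed
qed

(* for prime n, the cyclotomic polynomial 1 + x + ... + x^(n-1) *)
definition prime_cyclotomic :: "nat \<Rightarrow> 'a :: comm_ring_1 poly" where
  "prime_cyclotomic n = shifted_cyclotomic n \<circ>\<^sub>p [:-1, 1:]"

lemma degree_prime_cyclotomic:
  "n > 0 \<Longrightarrow> degree (prime_cyclotomic n :: 'a :: idom poly) = n - 1"
  by (simp add: prime_cyclotomic_def degree_pcompose degree_shifted_cyclotomic)

lemma irreducible_prime_cyclotomic:
  "prime n \<Longrightarrow> irreducible (prime_cyclotomic n :: rat poly)"
  unfolding prime_cyclotomic_def
  by (intro irreducible_pcompose_linear irreducible_shifted_cyclotomic) simp_all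

lemma poly_prime_cyclotomic:
  "poly (map_poly (of_rat :: rat \<Rightarrow> 'a :: field_char_0) (prime_cyclotomic n)) x
     = poly (shifted_cyclotomic n) (x - 1)"
proof -
  note hom = of_rat_hom.comm_semiring_hom_axioms
  have "map_poly of_rat (prime_cyclotomic n) = (shifted_cyclotomic n :: 'a poly) \<circ>\<^sub>p [:-1, 1:]"
    unfolding prime_cyclotomic_def comm_semiring_hom.map_poly_pcompose[OF hom]
      map_poly_shifted_cyclotomic[OF hom] by (simp add: map_poly_pCons)
  then show ?thesis by (simp add: poly_pcompose)
qed

lemma complex_subfield_of_rat:
  assumes S: "complex_subfield S" shows "of_rat q \<in> S"
proof -
  have nat: "of_nat k \<in> S" for k
    by (induction k) (use S in \<open>auto simp: complex_subfield_def\<close>)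
  have int: "of_int k \<in> S" for k
  proof (cases "k \<ge> 0")
    case True then show ?thesis using nat[of "nat k"] by simp
  next
    case False
    then have "of_int k = 0 - of_nat (nat (- k))" by simp
    with S nat show ?thesis unfolding complex_subfield_def by metis
  qed
  obtain a b where "q = of_int a / of_int b" by (metis quotient_of_div surj_pair)
  then have q: "of_rat q = of_int a * inverse (of_int b :: complex)"
    by (simp add: divide_inverse of_rat_mult of_rat_inverse)
  have "inverse (of_int b :: complex) \<in> S"
    using S int[of b] by (cases "b = 0") (auto simp: complex_subfield_def)
  with S int[of a] show ?thesis unfolding q complex_subfield_def by blast
qed

lemma complex_subfield_poly:
  assumes S: "complex_subfield S" and "x \<in> S"
  shows "poly (map_poly of_rat p) x \<in> S"
proof (induction p)
  case (pCons a p)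
  have "poly (map_poly of_rat (pCons a p)) x = of_rat a + x * poly (map_poly of_rat p) x"
    by (simp add: hom_distribs)
  with S pCons.IH \<open>x \<in> S\<close> complex_subfield_of_rat[OF S] show ?case
    unfolding complex_subfield_def by metis
qed (use S in \<open>simp add: complex_subfield_def\<close>)

lemma rat_basis_image:
  assumes "finite I" "b ` I \<subseteq> F"
    and independent: "\<And>c. (\<Sum>i\<in>I. of_rat (c i) * b i) = 0 \<Longrightarrow> \<forall>i\<in>I. c i = 0"
    and spanning: "\<And>z. z \<in> F \<Longrightarrow> \<exists>c. z = (\<Sum>i\<in>I. of_rat (c i) * b i)"
  shows "rat_basis (b ` I) F"
proof -
  have inj: "inj_on b I"
  proof (rule inj_onI, rule ccontr)
    fix i j assume ij: "i \<in> I" "j \<in> I" "b i = b j" "i \<noteq> j"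
    define c where "c k = (if k = i then 1 else if k = j then -1 else 0 :: rat)" for k
    have "(\<Sum>k\<in>I. of_rat (c k) * b k)
        = (\<Sum>k\<in>I. (if k = i then b i else 0) - (if k = j then b j else 0))"
      using ij(4) unfolding c_def by (intro sum.cong) auto
    also have "\<dots> = 0" using ij \<open>finite I\<close> by (simp add: sum_subtractf)
    finally show False using independent ij by (fastforce simp: c_def)
  qed
  have reindex: "(\<Sum>x\<in>b ` I. of_rat (c x) * x) = (\<Sum>i\<in>I. of_rat (c (b i)) * b i)" for c
    by (simp add: sum.reindex[OF inj])
  show ?thesis
    unfolding rat_basis_def
  proof (intro conjI allI impI ballI)
    show "finite (b ` I)" "b ` I \<subseteq> F" using assms(1,2) by auto
  next
    fix c x assume "(\<Sum>x\<in>b ` I. of_rat (c x) * x) = 0" "x \<in> b ` I"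
    then show "c x = 0" using independent[of "c \<circ> b"] by (auto simp: reindex)
  next
    fix z assume "z \<in> F"
    then obtain c where z: "z = (\<Sum>i\<in>I. of_rat (c i) * b i)" using spanning by blast
    have "z = (\<Sum>x\<in>b ` I. of_rat (c (inv_into I b x)) * x)"
      unfolding z reindex by (intro sum.cong) (simp_all add: inv_into_f_f[OF inj])
    then show "\<exists>c. z = (\<Sum>x\<in>b ` I. of_rat (c x) * x)"
      by (rule exI[of _ "\<lambda>x. c (inv_into I b x)"])
  qed
qed

lemma sum_reflect_indices:
  fixes n :: nat
  shows "(\<Sum>j\<in>{1..n - 1}. f (n - j)) = (\<Sum>j\<in>{1..n - 1}. f j)"
proof -
  have "(\<Sum>j\<in>{1..n - 1}. f (n - j)) = (\<Sum>j\<in>{1..n - 1}. f (n - 1 + 1 - j))"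
    by (rule sum.cong) auto
  then show ?thesis using sum.atLeastAtMost_rev[of f 1 "n - 1"] by simp
qed

locale prime_root_of_unity =
  fixes n :: nat and \<zeta> :: complex
  assumes prime: "prime n" and root: "\<zeta> ^ n = 1" and nontrivial: "\<zeta> \<noteq> 1"
begin

abbreviation \<Phi> :: "rat poly" where "\<Phi> \<equiv> prime_cyclotomic n"

abbreviation eval_zeta :: "rat poly \<Rightarrow> complex" where
  "eval_zeta p \<equiv> poly (map_poly of_rat p) \<zeta>"

definition rat_polynomial_values :: "complex set" where
  "rat_polynomial_values = range eval_zeta"

lemma n_gt_1: "n > 1"
  using prime prime_gt_1_nat by blast

lemma zeta_nonzero: "\<zeta> \<noteq> 0"
  using root n_gt_1 by (auto simp: power_0_left)

lemma eval_zeta_cyclotomic: "eval_zeta \<Phi> = 0"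
proof -
  have "(\<zeta> - 1) * eval_zeta \<Phi> = \<zeta> ^ n - 1"
    using poly_shifted_cyclotomic[of "\<zeta> - 1" n] by (simp add: poly_prime_cyclotomic)
  with root nontrivial show ?thesis by simp
qed

lemma eval_zeta_invertible:
  assumes "\<not> \<Phi> dvd p" obtains q where "eval_zeta q * eval_zeta p = 1"
proof -
  have "prime_elem \<Phi>"
    using irreducible_prime_cyclotomic[OF prime] by (rule field_poly_irreducible_imp_prime)
  then have "gcd \<Phi> p = 1" using assms by (simp add: prime_elem_imp_coprime)
  then have "fst (bezout_coefficients \<Phi> p) * \<Phi> + snd (bezout_coefficients \<Phi> p) * p = 1"
    by (simp add: bezout_coefficients_fst_snd)
  from arg_cong[OF this, of eval_zeta] show thesis
    using that eval_zeta_cyclotomic by (simp add: hom_distribs)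
qed

lemma cyclotomic_dvd_if_eval_zeta_eq_0: "eval_zeta p = 0 \<Longrightarrow> \<Phi> dvd p"
  by (metis eval_zeta_invertible mult_zero_right zero_neq_one)

lemma degree_cyclotomic: "degree \<Phi> = n - 1"
  using n_gt_1 by (simp add: degree_prime_cyclotomic)

lemma cyclotomic_nonzero: "\<Phi> \<noteq> 0"
proof
  assume "\<Phi> = 0"
  with degree_cyclotomic n_gt_1 show False by simp
qed

lemma subfield_rat_polynomial_values: "complex_subfield rat_polynomial_values"
  unfolding complex_subfield_def rat_polynomial_values_def
proof (intro conjI ballI impI)
  show "0 \<in> range eval_zeta" "1 \<in> range eval_zeta"
    using rangeI[of eval_zeta 0] rangeI[of eval_zeta 1] by simp_all
  fix x y assume "x \<in> range eval_zeta" "y \<in> range eval_zeta"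
  then obtain p q where "x = eval_zeta p" "y = eval_zeta q" by blast
  then have "x + y = eval_zeta (p + q)" "x - y = eval_zeta (p - q)" "x * y = eval_zeta (p * q)"
    by (simp_all add: hom_distribs)
  then show "x + y \<in> range eval_zeta" "x - y \<in> range eval_zeta" "x * y \<in> range eval_zeta"
    by simp_all
next
  fix x assume "x \<in> range eval_zeta" "x \<noteq> 0"
  then obtain p where x: "x = eval_zeta p" by blast
  then have "\<not> \<Phi> dvd p" using \<open>x \<noteq> 0\<close> eval_zeta_cyclotomic by (auto elim: dvdE simp: hom_distribs)
  then obtain q where "eval_zeta q * x = 1" using x eval_zeta_invertible by blast
  then have "inverse x = eval_zeta q" by (simp add: inverse_unique mult.commute)
  then show "inverse x \<in> range eval_zeta" by simp
qed

lemma zeta_in_rat_polynomial_values: "\<zeta> \<in> rat_polynomial_values"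
proof -
  have "\<zeta> = eval_zeta [:0, 1:]" by (simp add: map_poly_pCons)
  then show ?thesis unfolding rat_polynomial_values_def by (metis rangeI)
qed

lemma rat_adjoin_eq: "rat_adjoin \<zeta> = rat_polynomial_values"
proof
  show "rat_adjoin \<zeta> \<subseteq> rat_polynomial_values"
    unfolding rat_adjoin_def
    using subfield_rat_polynomial_values zeta_in_rat_polynomial_values by blast
  show "rat_polynomial_values \<subseteq> rat_adjoin \<zeta>"
    unfolding rat_adjoin_def rat_polynomial_values_def using complex_subfield_poly by blast
qed

lemma eval_zeta_sum_monom:
  "eval_zeta (\<Sum>j\<in>J. monom (c j) j) = (\<Sum>j\<in>J. of_rat (c j) * \<zeta> ^ j)"
  by (simp add: hom_distribs poly_sum poly_monom)

lemma low_powers_independent: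
  assumes "(\<Sum>j<n - 1. of_rat (c j) * \<zeta> ^ j) = 0" "j < n - 1"
  shows "c j = 0"
proof -
  define p where "p = (\<Sum>j<n - 1. monom (c j) j)"
  have "\<Phi> dvd p"
    using assms(1) by (intro cyclotomic_dvd_if_eval_zeta_eq_0) (simp add: p_def eval_zeta_sum_monom)
  moreover have "degree p < degree \<Phi>" if "p \<noteq> 0"
  proof -
    have "degree p \<le> n - 2" unfolding p_def
      by (rule degree_le) (auto simp: coeff_sum coeff_monom)
    then show ?thesis using n_gt_1 degree_cyclotomic by simp
  qed
  ultimately have "p = 0" using dvd_imp_degree_le by (metis not_le)
  then have "coeff p j = 0" by simp
  then show ?thesis using assms(2) by (simp add: p_def coeff_sum coeff_monom)
qed

lemma low_powers_span:
  assumes "z \<in> rat_polynomial_values"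
  shows "\<exists>c. z = (\<Sum>j<n - 1. of_rat (c j) * \<zeta> ^ j)"
proof -
  obtain p where z: "z = eval_zeta p" using assms by (auto simp: rat_polynomial_values_def)
  define r where "r = p mod \<Phi>"
  have "p = \<Phi> * (p div \<Phi>) + r" by (simp add: r_def)
  from arg_cong[OF this, of eval_zeta] have "z = eval_zeta r"
    unfolding z using eval_zeta_cyclotomic by (simp add: hom_distribs)
  also have "r = (\<Sum>j<n - 1. monom (coeff r j) j)"
  proof (rule poly_eqI)
    have "r = 0 \<or> degree r < n - 1"
      using degree_mod_less'[of \<Phi> p] cyclotomic_nonzero degree_cyclotomic by (auto simp: r_def)
    then have high: "coeff r k = 0" if "k \<ge> n - 1" for k
      using that by (metis coeff_0 coeff_eq_0 order_less_le_trans)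
    show "coeff r k = coeff (\<Sum>j<n - 1. monom (coeff r j) j) k" for k
      using high[of k] by (cases "k < n - 1") (simp_all add: coeff_sum coeff_monom)
  qed
  finally show ?thesis by (auto simp: eval_zeta_sum_monom)
qed

lemma sum_powers_shift:
  "(\<Sum>j\<in>{1..n - 1}. f j * \<zeta> ^ j) = \<zeta> * (\<Sum>j<n - 1. f (Suc j) * \<zeta> ^ j)"
proof -
  have "{1..n - 1} = Suc ` {..<n - 1}" by (simp add: image_Suc_lessThan)
  then show ?thesis by (simp add: sum.reindex sum_distrib_left mult_ac)
qed

lemma powers_independent:
  assumes "(\<Sum>j\<in>{1..n - 1}. of_rat (c j) * \<zeta> ^ j) = 0" "j \<in> {1..n - 1}"
  shows "c j = 0"
proof -
  have "(\<Sum>i<n - 1. of_rat (c (Suc i)) * \<zeta> ^ i) = 0"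
    using assms(1) zeta_nonzero sum_powers_shift[of "\<lambda>j. of_rat (c j)"] by simp
  moreover obtain i where "j = Suc i" "i < n - 1" using assms(2) by (cases j) auto
  ultimately show ?thesis using low_powers_independent[of "\<lambda>i. c (Suc i)" i] by simp
qed

lemma powers_span:
  assumes "z \<in> rat_polynomial_values"
  shows "\<exists>c. z = (\<Sum>j\<in>{1..n - 1}. of_rat (c j) * \<zeta> ^ j)"
proof -
  have "z * inverse \<zeta> \<in> rat_polynomial_values"
    using subfield_rat_polynomial_values zeta_in_rat_polynomial_values zeta_nonzero assms
    unfolding complex_subfield_def by blast
  then obtain d where "z * inverse \<zeta> = (\<Sum>j<n - 1. of_rat (d j) * \<zeta> ^ j)"
    using low_powers_span by blast
  then have "z = (\<Sum>j\<in>{1..n - 1}. of_rat (d (j - 1)) * \<zeta> ^ j)"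
    using zeta_nonzero sum_powers_shift[of "\<lambda>j. of_rat (d (j - 1))"] by (simp add: field_simps)
  then show ?thesis by (rule exI[of _ "\<lambda>j. d (j - 1)"])
qed

lemma cnj_power_zeta:
  assumes "k \<le> n" shows "cnj (\<zeta> ^ k) = \<zeta> ^ (n - k)"
proof -
  have "norm \<zeta> = 1" using root n_gt_1 power_eq_1_iff by fastforce
  then have "\<zeta> ^ k * cnj (\<zeta> ^ k) = 1"
    using complex_norm_square[of "\<zeta> ^ k"] by (simp add: norm_power)
  moreover have "\<zeta> ^ k * \<zeta> ^ (n - k) = 1"
    using assms root by (simp flip: power_add)
  moreover have "\<zeta> ^ k \<noteq> 0" using zeta_nonzero by simp
  ultimately show ?thesis by (metis mult_left_cancel)
qed

definition re_im_sign :: "nat \<Rightarrow> rat" where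
  "re_im_sign j = (if 2 * j < n then 1 else -1)"

(* Re \<zeta>^j for 2j < n, and i Im \<zeta>^(n-j) for 2j > n (re_im_basis_Re, re_im_basis_reflect_Im) *)
definition re_im_basis :: "nat \<Rightarrow> complex" where
  "re_im_basis j = (of_rat (re_im_sign j) * \<zeta> ^ j + \<zeta> ^ (n - j)) / 2"

lemma re_im_basis_Re:
  assumes "2 * j < n" shows "re_im_basis j = of_real (Re (\<zeta> ^ j))"
proof -
  have "\<zeta> ^ j + cnj (\<zeta> ^ j) = 2 * of_real (Re (\<zeta> ^ j))"
    by (subst complex_add_cnj) simp
  then show ?thesis
    using assms cnj_power_zeta[of j] by (simp add: re_im_basis_def re_im_sign_def field_simps)
qed

lemma re_im_basis_reflect_Im:
  assumes "2 * j < n" shows "re_im_basis (n - j) = \<i> * of_real (Im (\<zeta> ^ j))"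
proof -
  have "\<zeta> ^ j - cnj (\<zeta> ^ j) = 2 * (\<i> * of_real (Im (\<zeta> ^ j)))"
    by (subst complex_diff_cnj) simp
  moreover have "re_im_sign (n - j) = -1" "n - (n - j) = j" using assms by (auto simp: re_im_sign_def)
  ultimately show ?thesis
    using assms cnj_power_zeta[of j] by (simp add: re_im_basis_def field_simps)
qed

lemma re_im_basis_mem: "re_im_basis j \<in> rat_polynomial_values"
proof -
  have "re_im_basis j = eval_zeta (monom (re_im_sign j / 2) j + monom (1 / 2) (n - j))"
    by (simp add: re_im_basis_def hom_distribs poly_monom of_rat_divide add_divide_distrib)
  then show ?thesis unfolding rat_polynomial_values_def by (metis rangeI)
qed

lemma sum_re_im_basis:
  "(\<Sum>j\<in>{1..n - 1}. of_rat (c j) * re_im_basis j)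
     = (\<Sum>j\<in>{1..n - 1}. of_rat ((re_im_sign j * c j + c (n - j)) / 2) * \<zeta> ^ j)"
proof -
  have reflect: "(\<Sum>j\<in>{1..n - 1}. of_rat (c j / 2) * \<zeta> ^ (n - j))
      = (\<Sum>j\<in>{1..n - 1}. of_rat (c (n - j) / 2) * \<zeta> ^ j)"
  proof -
    have "(\<Sum>j\<in>{1..n - 1}. of_rat (c j / 2) * \<zeta> ^ (n - j))
        = (\<Sum>j\<in>{1..n - 1}. of_rat (c (n - (n - j)) / 2) * \<zeta> ^ (n - j))"
      by (rule sum.cong) auto
    also have "\<dots> = (\<Sum>j\<in>{1..n - 1}. of_rat (c (n - j) / 2) * \<zeta> ^ j)"
      by (rule sum_reflect_indices)
    finally show ?thesis .
  qed
  have "(\<Sum>j\<in>{1..n - 1}. of_rat (c j) * re_im_basis j)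
      = (\<Sum>j\<in>{1..n - 1}. of_rat (re_im_sign j * c j / 2) * \<zeta> ^ j)
        + (\<Sum>j\<in>{1..n - 1}. of_rat (c j / 2) * \<zeta> ^ (n - j))"
    by (simp add: re_im_basis_def sum.distrib[symmetric] of_rat_mult of_rat_divide field_simps)
  also have "\<dots> = (\<Sum>j\<in>{1..n - 1}. of_rat ((re_im_sign j * c j + c (n - j)) / 2) * \<zeta> ^ j)"
    unfolding reflect sum.distrib[symmetric]
    by (intro sum.cong refl) (simp add: add_divide_distrib of_rat_add distrib_right)
  finally show ?thesis .
qed

context
  assumes odd: "odd n"
begin

lemma re_im_sign_reflect: "j \<in> {1..n - 1} \<Longrightarrow> re_im_sign (n - j) = - re_im_sign j"
  using odd by (auto simp: re_im_sign_def elim!: oddE; presburger)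

lemma re_im_basis_independent:
  assumes "(\<Sum>j\<in>{1..n - 1}. of_rat (c j) * re_im_basis j) = 0" "j \<in> {1..n - 1}"
  shows "c j = 0"
proof -
  have coeff: "re_im_sign i * c i + c (n - i) = 0" if "i \<in> {1..n - 1}" for i
    using powers_independent[OF assms(1)[unfolded sum_re_im_basis] that] by simp
  have "n - j \<in> {1..n - 1}" "n - (n - j) = j" using assms(2) by auto
  then have "- re_im_sign j * c (n - j) + c j = 0"
    using coeff[of "n - j"] re_im_sign_reflect[OF assms(2)] by simp
  with coeff[OF assms(2)] show ?thesis
    by (cases "2 * j < n"; simp add: re_im_sign_def; linarith)
qed

lemma re_im_basis_span:
  assumes "z \<in> rat_polynomial_values"
  shows "\<exists>c. z = (\<Sum>j\<in>{1..n - 1}. of_rat (c j) * re_im_basis j)"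
proof -
  obtain d where z: "z = (\<Sum>j\<in>{1..n - 1}. of_rat (d j) * \<zeta> ^ j)"
    using powers_span assms by blast
  define c where "c j = re_im_sign j * d j + d (n - j)" for j
  have "(re_im_sign j * c j + c (n - j)) / 2 = d j" if "j \<in> {1..n - 1}" for j
  proof -
    have "n - (n - j) = j" using that by auto
    then have "c (n - j) = - re_im_sign j * d (n - j) + d j"
      using re_im_sign_reflect[OF that] by (simp add: c_def)
    then show ?thesis by (cases "2 * j < n") (simp_all add: c_def re_im_sign_def field_simps)
  qed
  then have "z = (\<Sum>j\<in>{1..n - 1}. of_rat (c j) * re_im_basis j)"
    unfolding z sum_re_im_basis by (intro sum.cong) simp_all
  then show ?thesis by (rule exI[of _ c])
qed

lemma rat_basis_re_im_basis: "rat_basis (re_im_basis ` {1..n - 1}) (rat_adjoin \<zeta>)"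
proof (rule rat_basis_image)
  show "finite {1..n - 1}" by simp
  show "re_im_basis ` {1..n - 1} \<subseteq> rat_adjoin \<zeta>"
    using re_im_basis_mem by (auto simp: rat_adjoin_eq)
  show "\<forall>i\<in>{1..n - 1}. c i = 0" if "(\<Sum>i\<in>{1..n - 1}. of_rat (c i) * re_im_basis i) = 0" for c
    using re_im_basis_independent that by blast
  show "\<exists>c. z = (\<Sum>i\<in>{1..n - 1}. of_rat (c i) * re_im_basis i)" if "z \<in> rat_adjoin \<zeta>" for z
    using re_im_basis_span that by (simp add: rat_adjoin_eq)
qed

lemma image_re_im_basis:
  "re_im_basis ` {1..n - 1} =
     {of_real (Re (\<zeta> ^ k)) | k. 1 \<le> k \<and> k \<le> (n - 1) div 2} \<union>
     {\<i> * of_real (Im (\<zeta> ^ k)) | k. 1 \<le> k \<and> k \<le> (n - 1) div 2}"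
proof -
  define m where "m = (n - 1) div 2"
  have n: "n = 2 * m + 1" using odd by (auto simp: m_def elim!: oddE)
  have "{1..n - 1} = {1..m} \<union> (\<lambda>k. n - k) ` {1..m}"
  proof (intro equalityI subsetI)
    fix j assume j: "j \<in> {1..n - 1}"
    show "j \<in> {1..m} \<union> (\<lambda>k. n - k) ` {1..m}"
    proof (cases "j \<le> m")
      case False
      then have "n - j \<in> {1..m}" "j = n - (n - j)" using j n by auto
      then show ?thesis by blast
    qed (use j in auto)
  qed (use n in auto)
  moreover have "re_im_basis ` {1..m} = (\<lambda>k. of_real (Re (\<zeta> ^ k))) ` {1..m}"
    by (rule image_cong) (use re_im_basis_Re n in auto)
  moreover have "re_im_basis ` (\<lambda>k. n - k) ` {1..m} = (\<lambda>k. \<i> * of_real (Im (\<zeta> ^ k))) ` {1..m}"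
    unfolding image_image by (rule image_cong) (use re_im_basis_reflect_Im n in auto)
  ultimately show ?thesis by (auto simp: image_Un m_def)
qed

end

end

lemma exp_two_pi_i_div_power: "exp (2 * of_real pi * \<i> / of_nat n) ^ n = 1"
proof (cases "n = 0")
  case False
  then have "exp (2 * of_real pi * \<i> / of_nat n) ^ n = exp (2 * of_real pi * \<i>)"
    by (simp flip: exp_of_nat_mult)
  then show ?thesis by simp
qed simp

lemma exp_two_pi_i_div_neq_1:
  assumes "n > 2" shows "exp (2 * of_real pi * \<i> / of_nat n) \<noteq> 1"
proof -
  have "exp (2 * of_real pi * \<i> / of_nat n) = cis (2 * pi / n)"
    by (simp add: cis_conv_exp mult_ac)
  moreover have "sin (2 * pi / n) > 0"
    using assms by (intro sin_gt_zero) (simp_all add: field_simps)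
  ultimately have "Im (exp (2 * of_real pi * \<i> / of_nat n)) > 0" by simp
  then show ?thesis by auto
qed

theorem lemma5:
  fixes n :: nat
  assumes "prime n" and "odd n"
  defines "\<omega> \<equiv> exp (2 * of_real pi * \<i> / of_nat n)"
  defines "A \<equiv> {complex_of_real (Re (\<omega> ^ k)) | k. 1 \<le> k \<and> k \<le> (n - 1) div 2}"
  defines "B \<equiv> {\<i> * complex_of_real (Im (\<omega> ^ k)) | k. 1 \<le> k \<and> k \<le> (n - 1) div 2}"
  shows "rat_basis (A \<union> B) (rat_adjoin \<omega>)"
proof -
  have "n > 2" using prime_ge_2_nat[OF assms(1)] assms(2) by (cases "n = 2") auto
  interpret prime_root_of_unity n \<omega>
    using assms(1) exp_two_pi_i_div_power exp_two_pi_i_div_neq_1[OF \<open>n > 2\<close>]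
    unfolding \<omega>_def by unfold_locales
  show ?thesis
    unfolding A_def B_def
    using rat_basis_re_im_basis[OF assms(2)] image_re_im_basis[OF assms(2)] by simp
qed

end
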